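(* Let $\eta>0$ and let $I=[u,u+\eta]$ and $J=[v,v+\eta]$ be two intervals contained in $[0,1]$. Then for all sufficiently large $n$ there exists an integer $a$ such that $$\frac{a}{F_n}\in I,\qquad \left\{\frac{F_{n-1}a}{F_n}\right\}\in J,\qquad 1\leqslant a<F_n,\qquad \gcd(a,F_n)=1.$$
   Context: $F_n$ denotes the $n$-th Fibonacci number ($F_1=F_2=1$, $F_{n+1}=F_n+F_{n-1}$). For a real number $t$, $\{t\}$ denotes its fractional part. *)

theory Defs
  imports "HOL-Analysis.Analysis" "HOL-Number_Theory.Fib"
begin

end

theory Submission
  imports Defs
begin

(* Write n = k + j + 2 with j = n div 2 and F_(k+1) prime to F_n, which is possible because
   gcd (F_a) (F_b) = F_(gcd a b).  By d'Ocagne's identity, a = x F_(k+1) + y F_(k+2) satisfies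
   F_(n-1) a = (-1)^k (x F_(j+1) - y F_j)  (mod F_n),  and  F_n = F_(j+1) F_(k+2) + F_j F_(k+1).
   So the pairs (a, F_(n-1) a mod F_n) range over a lattice with a basis of size O(sqrt F_n), and
   rounding the real solution (x, y) aimed at the centres of I and J (scaled by F_n) gives an error
   O(sqrt F_n).  Shifting x by 0 <= t < T, with T of order eta sqrt F_n, keeps the point inside the
   target box and moves a along an arithmetic progression whose difference F_(k+1) is prime to F_n.
   Legendre's sieve then finds a t with a prime to F_n, since its error 2^omega(F_n) is
   O(F_n^(1/6)) by 64^omega(N) <= 64^64 N. *)

definition sifted_interval :: "int set \<Rightarrow> real \<Rightarrow> real \<Rightarrow> int set" where
  "sifted_interval S c T = {m. c \<le> of_int m \<and> of_int m < c + T \<and> (\<forall>p\<in>S. \<not> p dvd m)}"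

lemma finite_sifted_interval: "finite (sifted_interval S c T)"
  by (rule finite_subset[of _ "{\<lfloor>c\<rfloor>..\<lceil>c + T\<rceil>}"])
     (auto simp: sifted_interval_def floor_le_iff le_ceiling_iff)

lemma card_sifted_interval_empty:
  assumes "0 \<le> T"
  shows "\<bar>real (card (sifted_interval {} c T)) - T\<bar> \<le> 1"
proof -
  have eq: "sifted_interval {} c T = {\<lceil>c\<rceil>..<\<lceil>c + T\<rceil>}"
    by (auto simp: sifted_interval_def ceiling_le_iff less_ceiling_iff)
  have "\<lceil>c\<rceil> \<le> \<lceil>c + T\<rceil>"
    using assms by (intro ceiling_mono) simp
  then have "real (card (sifted_interval {} c T)) = of_int \<lceil>c + T\<rceil> - of_int \<lceil>c\<rceil>"
    unfolding eq by simp
  moreover have "c \<le> of_int \<lceil>c\<rceil>" "of_int \<lceil>c\<rceil> < c + 1"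
    "c + T \<le> of_int \<lceil>c + T\<rceil>" "of_int \<lceil>c + T\<rceil> < c + T + 1"
    by linarith+
  ultimately show ?thesis by linarith
qed

lemma card_sifted_interval_multiples:
  assumes "prime p" "p \<notin> S" "\<forall>q\<in>S. prime q"
  shows "card {m \<in> sifted_interval S c T. p dvd m} = card (sifted_interval S (c / p) (T / p))"
proof -
  have p: "p > 0"
    using assms(1) prime_gt_0_int by blast
  have coprime_factor: "q dvd p * m \<longleftrightarrow> q dvd m" if "q \<in> S" for q m
  proof -
    have "prime q" "q \<noteq> p"
      using that assms by auto
    then have "\<not> q dvd p"
      using primes_dvd_imp_eq[OF _ assms(1)] by blast
    then show ?thesis
      using \<open>prime q\<close> by (auto simp: prime_dvd_mult_iff)
  qed
  have scale: "c \<le> of_int (p * m) \<longleftrightarrow> c / p \<le> of_int m"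
    "of_int (p * m) < c + T \<longleftrightarrow> of_int m < c / p + T / p" for m
    using p by (simp_all add: pos_divide_le_eq pos_less_divide_eq flip: add_divide_distrib, simp_all add: mult.commute)
  have "{m \<in> sifted_interval S c T. p dvd m} = (\<lambda>m. p * m) ` sifted_interval S (c / p) (T / p)"
    (is "?D = ?I")
  proof
    show "?D \<subseteq> ?I"
    proof
      fix x assume x: "x \<in> ?D"
      then obtain m where "x = p * m"
        by (auto elim: dvdE)
      with x show "x \<in> ?I"
        unfolding sifted_interval_def by (auto simp: coprime_factor scale simp del: of_int_mult)
    qed
    show "?I \<subseteq> ?D"
      unfolding sifted_interval_def by (auto simp: coprime_factor scale simp del: of_int_mult)
  qed
  moreover have "inj_on (\<lambda>m. p * m) A" for A
    using p by (auto simp: inj_on_def)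
  ultimately show ?thesis
    by (simp add: card_image)
qed

(* Legendre's sieve.  Adding a prime p at most doubles the error, because the multiples of p that
   survive the primes of S correspond to the integers surviving S in the interval scaled by 1/p. *)
lemma card_sifted_interval:
  assumes "finite S" "\<forall>p\<in>S. prime p" "0 \<le> T"
  shows "\<bar>real (card (sifted_interval S c T)) - T * (\<Prod>p\<in>S. 1 - 1 / p)\<bar> \<le> 2 ^ card S"
  using assms
proof (induction S arbitrary: c T rule: finite_induct)
  case empty
  then show ?case using card_sifted_interval_empty by simp
next
  case (insert p S)
  define P where "P = (\<Prod>q\<in>S. 1 - 1 / real_of_int q)"
  define D where "D = {m \<in> sifted_interval S c T. p dvd m}"
  have p: "prime p" "p > 0"
    using insert.prems prime_gt_0_int by auto
  have "sifted_interval (insert p S) c T = sifted_interval S c T - D"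
    by (auto simp: sifted_interval_def D_def)
  moreover have "D \<subseteq> sifted_interval S c T"
    by (auto simp: D_def)
  ultimately have "real (card (sifted_interval (insert p S) c T))
      = real (card (sifted_interval S c T)) - real (card D)"
    by (simp add: card_Diff_subset finite_subset[OF _ finite_sifted_interval] card_mono
        finite_sifted_interval of_nat_diff)
  moreover have "card D = card (sifted_interval S (c / p) (T / p))"
    unfolding D_def using insert p by (intro card_sifted_interval_multiples) auto
  moreover have "\<bar>real (card (sifted_interval S c T)) - T * P\<bar> \<le> 2 ^ card S"
    using insert.IH[of T c] insert.prems by (simp add: P_def)
  moreover have "\<bar>real (card (sifted_interval S (c / p) (T / p))) - T / p * P\<bar> \<le> 2 ^ card S"
    using insert.IH[of "T / p" "c / p"] insert.prems p by (simp add: P_def)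
  moreover have "T * (\<Prod>q\<in>insert p S. 1 - 1 / real_of_int q) = T * P - T / p * P"
    using insert by (simp add: P_def algebra_simps)
  ultimately show ?case
    using insert.hyps by (simp add: abs_le_iff)
qed

lemma sifted_interval_nonempty:
  assumes "finite S" "\<forall>p\<in>S. prime p" "4 ^ card S < T"
  shows "sifted_interval S c T \<noteq> {}"
proof -
  have "(1 / 2) ^ card S \<le> (\<Prod>p\<in>S. 1 - 1 / real_of_int p)"
  proof -
    have "(1 / 2 :: real) ^ card S = (\<Prod>p\<in>S. 1 / 2)"
      by simp
    also have "\<dots> \<le> (\<Prod>p\<in>S. 1 - 1 / real_of_int p)"
    proof (rule prod_mono)
      fix p assume "p \<in> S"
      then have "real_of_int p \<ge> 2"
        using assms(2) prime_ge_2_int by force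
      then show "0 \<le> (1 / 2 :: real) \<and> 1 / 2 \<le> 1 - 1 / real_of_int p"
        by (simp add: field_simps)
    qed
    finally show ?thesis .
  qed
  moreover have "T > 0"
    using assms(3) zero_less_power[of "4::real" "card S"] by linarith
  ultimately have "T * (1 / 2) ^ card S \<le> T * (\<Prod>p\<in>S. 1 - 1 / real_of_int p)"
    by simp
  moreover have "2 ^ card S < T * (1 / 2) ^ card S"
    using assms(3) by (simp add: field_simps power_one_over flip: power_mult_distrib)
  ultimately have "real (card (sifted_interval S c T)) > 0"
    using card_sifted_interval[OF assms(1,2) less_imp_le[OF \<open>T > 0\<close>], of c]
    by (simp add: abs_le_iff)
  then show ?thesis
    by fastforce
qed

lemma prod_prime_factors_le:
  fixes N :: int
  assumes "N > 0" "A \<subseteq> prime_factors N"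
  shows "(\<Prod>p\<in>A. p) \<le> N"
proof -
  have "(\<Prod>p\<in>A. p) dvd (\<Prod>p\<in>prime_factors N. p ^ multiplicity p N)"
  proof (rule prod_dvd_prod_subset2)
    fix p assume "p \<in> A"
    then have "multiplicity p N > 0"
      using assms by (auto simp: prime_factors_multiplicity)
    then show "p dvd p ^ multiplicity p N"
      by (simp add: dvd_power)
  qed (use assms(2) in auto)
  also have "\<dots> = N"
    using assms(1) by (simp add: prod_prime_factors)
  finally show ?thesis
    using assms(1) by (rule zdvd_imp_le)
qed

lemma card_prime_factors_bound:
  fixes N :: int and B :: nat
  assumes "N > 0" "1 \<le> B"
  shows "real B ^ card (prime_factors N) \<le> real B ^ B * of_int N"
proof -
  define small where "small = {p \<in> prime_factors N. p < int B}"
  define large where "large = {p \<in> prime_factors N. int B \<le> p}"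
  have fin: "finite small" "finite large"
    by (simp_all add: small_def large_def)
  have split: "prime_factors N = small \<union> large"
    by (auto simp: small_def large_def)
  have card_split: "card (prime_factors N) = card small + card large"
    unfolding split using fin by (rule card_Un_disjoint) (auto simp: small_def large_def)
  have "small \<subseteq> {0..<int B}"
    by (auto simp: small_def intro: prime_ge_0_int)
  then have "card small \<le> B"
    using card_mono[of "{0..<int B}" small] by simp
  moreover have "real B ^ card large \<le> of_int N"
  proof -
    have "real B ^ card large = (\<Prod>p\<in>large. real B)"
      by simp
    also have "\<dots> \<le> (\<Prod>p\<in>large. real_of_int p)"
      by (intro prod_mono) (auto simp: large_def)
    also have "\<dots> \<le> of_int N"
      using prod_prime_factors_le[OF assms(1), of large] by (simp add: large_def flip: of_int_prod)
    finally show ?thesis .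
  qed
  ultimately show ?thesis
    using assms(2) unfolding card_split power_add by (intro mult_mono power_increasing) auto
qed

lemma exists_coprime_in_interval:
  fixes N :: int and c T :: real
  assumes "N > 0" "64 ^ 64 * real_of_int N < T ^ 3"
  shows "\<exists>m::int. c \<le> m \<and> m < c + T \<and> coprime m N"
proof -
  define S where "S = prime_factors N"
  have "0 < 64 ^ 64 * real_of_int N"
    using assms(1) by simp
  then have "0 < T ^ 3"
    using assms(2) by linarith
  then have "T > 0"
    by (simp add: zero_less_power_eq)
  have "(4 ^ card S) ^ 3 = (4 ^ 3 :: real) ^ card S"
    by (metis power_mult mult.commute)
  also have "\<dots> \<le> 64 ^ 64 * of_int N"
    using card_prime_factors_bound[OF assms(1), of 64] by (simp add: S_def)
  also have "\<dots> < T ^ 3"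
    by (fact assms(2))
  finally have "4 ^ card S < T"
    using \<open>T > 0\<close> by (simp add: power_less_imp_less_base[of _ 3])
  then obtain m where m: "m \<in> sifted_interval S c T"
    using sifted_interval_nonempty[of S T c] by (auto simp: S_def)
  have "coprime m N"
  proof (rule ccontr)
    assume "\<not> coprime m N"
    then have "\<not> is_unit (gcd m N)" "gcd m N \<noteq> 0"
      using assms(1) by (auto simp: coprime_iff_gcd_eq_1)
    then obtain p where "prime p" "p dvd gcd m N"
      using prime_divisorE by blast
    then show False
      using m assms(1) by (auto simp: sifted_interval_def S_def in_prime_factors_iff)
  qed
  then show ?thesis
    using m by (auto simp: sifted_interval_def)
qed

lemma exists_coprime_in_progression:
  fixes a p N :: int and T :: real
  assumes "coprime p N" "N > 0" "64 ^ 64 * real_of_int N < T ^ 3"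
  shows "\<exists>t::int. 0 \<le> t \<and> t < T \<and> coprime (a + t * p) N"
proof -
  obtain w z where wz: "w * p + z * N = 1"
    using bezout_int[of p N] assms(1) by (auto simp: coprime_iff_gcd_eq_1)
  obtain m :: int where m: "of_int (w * a) \<le> real_of_int m" "m < of_int (w * a) + T" "coprime m N"
    using exists_coprime_in_interval[OF assms(2,3)] by blast
  define t where "t = m - w * a"
  have "w * (a + t * p) = w * a + t * (w * p)"
    by (simp add: algebra_simps)
  also have "\<dots> = w * a + t * (1 - z * N)"
    using wz by (simp add: eq_diff_eq)
  also have "\<dots> = (- t * z) * N + m"
    by (simp add: t_def algebra_simps)
  finally have "gcd N (w * (a + t * p)) = gcd N m"
    by (simp only: gcd_add_mult)
  then have "coprime (w * (a + t * p)) N"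
    using m(3) by (simp add: coprime_iff_gcd_eq_1 gcd.commute)
  moreover have "0 \<le> t"
    using m(1) unfolding t_def of_int_le_iff by simp
  moreover have "t < T"
    using m(2) by (simp add: t_def)
  ultimately show ?thesis
    by auto
qed

lemma fib_dOcagne_int:
  "int (fib (k + j)) * int (fib (k + 1)) - int (fib (k + j + 1)) * int (fib k)
     = (-1) ^ k * int (fib j)"
proof (induction j rule: fib.induct)
  case 1
  then show ?case by simp
next
  case 2
  then show ?case
    using fib_Cassini_int[of k] by (simp add: power2_eq_square algebra_simps)
next
  case (3 j)
  have "fib (k + Suc (Suc j)) = fib (k + Suc j) + fib (k + j)"
    "fib (k + Suc (Suc j) + 1) = fib (k + Suc j + 1) + fib (k + j + 1)"
    by simp_all
  with 3 show ?case
    by (simp add: algebra_simps)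
qed

lemma fib_pred_mult:
  fixes x y :: int
  shows "int (fib (k + j + 1)) * (x * fib (k + 1) + y * fib (k + 2))
    = int (fib (k + j + 2)) * (x * fib k + y * fib (k + 1)) + (-1) ^ k * (x * fib (j + 1) - y * fib j)"
proof -
  have dOcagne1: "int (fib (k + j + 1)) * fib (k + 1) = int (fib (k + j + 2)) * fib k + (-1) ^ k * fib (j + 1)"
    using fib_dOcagne_int[of k "j + 1"] by (simp add: algebra_simps)
  have dOcagne2: "int (fib (k + j + 1)) * fib (k + 2) = int (fib (k + j + 2)) * fib (k + 1) - (-1) ^ k * fib j"
    using fib_dOcagne_int[of "k + 1" j] by (simp add: algebra_simps)
  have "int (fib (k + j + 1)) * (x * fib (k + 1) + y * fib (k + 2))
      = x * (int (fib (k + j + 1)) * fib (k + 1)) + y * (int (fib (k + j + 1)) * fib (k + 2))"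
    by (simp add: algebra_simps)
  also have "\<dots> = x * (int (fib (k + j + 2)) * fib k + (-1) ^ k * fib (j + 1))
      + y * (int (fib (k + j + 2)) * fib (k + 1) - (-1) ^ k * fib j)"
    by (simp only: dOcagne1 dOcagne2)
  also have "\<dots> = int (fib (k + j + 2)) * (x * fib k + y * fib (k + 1))
      + (-1) ^ k * (x * fib (j + 1) - y * fib j)"
    by (simp add: algebra_simps)
  finally show ?thesis .
qed

lemma fib_add_eq: "fib (k + j + 2) = fib (j + 1) * fib (k + 2) + fib j * fib (k + 1)"
  using fib_add[of j "k + 1"] by (simp add: ac_simps)

lemma le_fib_Suc: "n \<le> fib (Suc n)"
proof (induction n rule: fib.induct)
  case (3 n)
  then show ?case
    using fib_neq_0_nat[of "Suc n"] by simp
qed simp_all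

lemma filterlim_fib_at_top: "filterlim (\<lambda>n. real (fib n)) at_top sequentially"
proof -
  have "filterlim (\<lambda>n. real (fib (Suc n))) at_top sequentially"
    by (rule filterlim_at_top_mono[OF filterlim_real_sequentially]) (simp add: le_fib_Suc)
  then show ?thesis
    by (rule filterlim_sequentially_Suc[of "\<lambda>n. real (fib n)", THEN iffD1])
qed

lemma coprime_fibI:
  assumes "gcd m n dvd 2" "n \<noteq> 0"
  shows "coprime (fib m) (fib n)"
proof -
  have "gcd m n = 1 \<or> gcd m n = 2"
    using assms dvd_imp_le[OF assms(1)] by (cases "gcd m n") (auto simp: le_Suc_eq)
  then have "gcd (fib m) (fib n) = 1"
    by (auto simp flip: fib_gcd)
  then show ?thesis
    by (simp add: coprime_iff_gcd_eq_1)
qed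

lemma coprime_fib_near_half:
  assumes "4 \<le> n"
  obtains k where "k + n div 2 + 2 = n" "coprime (fib (k + 1)) (fib n)"
proof (cases "even n")
  case True
  then obtain m where n: "n = 2 * m"
    by (rule evenE)
  have "2 \<le> m"
    using assms n by simp
  have "n = 2 * (m - 1) + 2"
    using n \<open>2 \<le> m\<close> by simp
  then have "gcd (m - 1) n = gcd (m - 1) 2"
    by (simp only: gcd_add_mult)
  then have "coprime (fib (m - 1)) (fib n)"
    using assms by (intro coprime_fibI) auto
  moreover have "m - 2 + 1 = m - 1" "m - 2 + n div 2 + 2 = n"
    using n \<open>2 \<le> m\<close> by auto
  ultimately show ?thesis
    using that[of "m - 2"] by simp
next
  case False
  then obtain m where n: "n = 2 * m + 1"
    by (rule oddE)
  have "gcd m n = 1"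
    using gcd_add_mult[of m 2 1] n by simp
  then have "coprime (fib m) (fib n)"
    using n by (intro coprime_fibI) auto
  then show ?thesis
    using that[of "m - 1"] n assms by simp
qed

lemma fib_le_sqrt:
  assumes "1 \<le> m" "2 * m \<le> n"
  shows "real (fib (m + 2)) \<le> 3 * sqrt (fib n)"
proof -
  have "fib (m + 1) \<le> 2 * fib m"
    using assms(1) fib_mono[of "m - 1" m] by (cases m) auto
  then have "fib (m + 2) \<le> 3 * fib m"
    by (simp add: fib_plus_2)
  then have "(fib (m + 2))\<^sup>2 \<le> (3 * fib m)\<^sup>2"
    by (rule power_mono) simp
  also have "\<dots> = 9 * (fib m * fib m)"
    by (simp add: power2_eq_square)
  also have "fib m * fib m \<le> (fib (m - 1) + fib (m + 1)) * fib m"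
    using fib_Suc_mono[of m] by (intro mult_le_mono1) simp
  also have "\<dots> = fib (2 * m)"
    by (rule fib_rec_even[symmetric])
  also have "\<dots> \<le> fib n"
    using assms(2) by (rule fib_mono)
  finally have "(fib (m + 2))\<^sup>2 \<le> 9 * fib n"
    by simp
  then have "real ((fib (m + 2))\<^sup>2) \<le> real (9 * fib n)"
    by (simp only: of_nat_le_iff)
  then have "real (fib (m + 2)) \<le> sqrt (9 * fib n)"
    by (intro real_le_rsqrt) simp
  also have "\<dots> = 3 * sqrt (fib n)"
    using real_sqrt_unique[of 3 9] by (simp add: real_sqrt_mult)
  finally show ?thesis .
qed

lemma exists_coprime_lattice_point:
  fixes p q r r' N :: int and \<alpha> \<beta> M T \<epsilon> :: real
  assumes N: "N = r' * q + r * p" and nonneg: "0 \<le> p" "0 \<le> q" "0 \<le> r" "0 \<le> r'"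
    and "coprime p N" "N > 0"
    and M: "p + q \<le> M" "r + r' \<le> M" "M < \<epsilon>"
    and T: "T * M \<le> \<epsilon>" "64 ^ 64 * real_of_int N < T ^ 3"
  shows "\<exists>x y. coprime (x * p + y * q) N
    \<and> \<bar>of_int (x * p + y * q) - \<alpha> * N\<bar> < 2 * \<epsilon>
    \<and> \<bar>of_int (x * r' - y * r) - \<beta> * N\<bar> < 2 * \<epsilon>"
proof -
  define X where "X = \<alpha> * r + \<beta> * q"
  define Y where "Y = \<alpha> * r' - \<beta> * p"
  have XY: "X * p + Y * q = \<alpha> * N" "X * r' - Y * r = \<beta> * N"
    unfolding X_def Y_def N by (simp_all add: algebra_simps)
  define e where "e = X - \<lfloor>X\<rfloor>"
  define f where "f = Y - \<lfloor>Y\<rfloor>"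
  have ef: "0 \<le> e" "e \<le> 1" "0 \<le> f" "f \<le> 1"
    unfolding e_def f_def by linarith+
  obtain t :: int where t: "0 \<le> t" "t < T" "coprime (\<lfloor>X\<rfloor> * p + \<lfloor>Y\<rfloor> * q + t * p) N"
    using exists_coprime_in_progression[OF \<open>coprime p N\<close> \<open>N > 0\<close> T(2)] by blast
  define x where "x = \<lfloor>X\<rfloor> + t"
  define y where "y = \<lfloor>Y\<rfloor>"
  have a: "of_int (x * p + y * q) - \<alpha> * N = of_int t * of_int p - e * p - f * q"
    using XY(1) by (simp add: x_def y_def e_def f_def algebra_simps)
  have b: "of_int (x * r' - y * r) - \<beta> * N = of_int t * of_int r' - e * r' + f * r"
    using XY(2) by (simp add: x_def y_def e_def f_def algebra_simps)
  have M': "real_of_int p + real_of_int q \<le> M" "real_of_int r + real_of_int r' \<le> M"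
    using M by simp_all
  have "T \<ge> 0"
    using t by linarith
  then have "t * real_of_int p \<le> T * M" "t * real_of_int r' \<le> T * M"
    using t nonneg M' by (auto intro!: mult_mono)
  moreover have "0 \<le> t * real_of_int p" "0 \<le> t * real_of_int r'"
    using t nonneg by simp_all
  moreover have "0 \<le> e * p" "e * p \<le> p" "0 \<le> f * q" "f * q \<le> q"
    "0 \<le> e * r'" "e * r' \<le> r'" "0 \<le> f * r" "f * r \<le> r"
    using ef nonneg by (auto intro: mult_left_le_one_le)
  ultimately have "\<bar>of_int (x * p + y * q) - \<alpha> * N\<bar> < 2 * \<epsilon>"
    "\<bar>of_int (x * r' - y * r) - \<beta> * N\<bar> < 2 * \<epsilon>"
    using M' M(3) T(1) by (simp_all only: a b abs_less_iff) linarith+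
  moreover have "coprime (x * p + y * q) N"
    using t(3) by (simp add: x_def y_def algebra_simps)
  ultimately show ?thesis
    by blast
qed

lemma lattice_scale_bounds:
  fixes \<eta> K M N :: real
  assumes "\<eta> > 0" "K \<ge> 0" "0 < M" "M \<le> 3 * sqrt N"
    and "12 / \<eta> < sqrt N" "1728 * K / \<eta> ^ 3 < sqrt N"
  shows "M < \<eta> * N / 4" "K * N < (\<eta> * N / (4 * M)) ^ 3"
proof -
  define s where "s = sqrt N"
  have "0 < 12 / \<eta>"
    using assms(1) by simp
  then have "s > 0"
    using assms(5) unfolding s_def by linarith
  then have N: "N = s\<^sup>2"
    unfolding s_def by simp
  have M: "M \<le> 3 * s"
    using assms(4) by (simp add: s_def)
  have "12 < \<eta> * s"
    using assms(1,5) by (simp add: s_def pos_divide_less_eq mult.commute)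
  then have "12 * s < \<eta> * s * s"
    using \<open>s > 0\<close> by (rule mult_strict_right_mono)
  then show "M < \<eta> * N / 4"
    using M by (simp add: N power2_eq_square field_simps)
  have "\<eta> * N / (12 * s) \<le> \<eta> * N / (4 * M)"
    using assms(1,3) M \<open>s > 0\<close> by (intro divide_left_mono) (auto simp: N)
  then have "(\<eta> * s / 12) ^ 3 \<le> (\<eta> * N / (4 * M)) ^ 3"
    using assms(1) \<open>s > 0\<close> by (intro power_mono) (auto simp: N power2_eq_square)
  moreover have "K * N < (\<eta> * s / 12) ^ 3"
  proof -
    have "1728 * K < \<eta> ^ 3 * s"
      using assms(1,6) by (simp add: s_def pos_divide_less_eq mult.commute)
    then have "1728 * K * s\<^sup>2 < \<eta> ^ 3 * s * s\<^sup>2"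
      using \<open>s > 0\<close> by (intro mult_strict_right_mono) auto
    then show ?thesis
      by (simp add: N power3_eq_cube power2_eq_square field_simps)
  qed
  ultimately show "K * N < (\<eta> * N / (4 * M)) ^ 3"
    by linarith
qed

lemma abs_sub_midpoint_less:
  fixes z w \<eta> N :: real
  assumes "\<bar>z - (w + \<eta> / 2) * N\<bar> < \<eta> * N / 2"
  shows "w * N < z" "z < (w + \<eta>) * N"
proof -
  have "- (\<eta> * N / 2) < z - (w + \<eta> / 2) * N" "z - (w + \<eta> / 2) * N < \<eta> * N / 2"
    using assms unfolding abs_less_iff by linarith+
  moreover have "(w + \<eta> / 2) * N = w * N + \<eta> * N / 2" "(w + \<eta>) * N = w * N + \<eta> * N"
    by (simp_all add: algebra_simps)
  ultimately show "w * N < z" "z < (w + \<eta>) * N"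
    by linarith+
qed

lemma frac_div_eq_remainder:
  fixes C a N Q b :: int
  assumes "C * a = N * Q + b" "0 \<le> b" "b < N"
  shows "frac (of_int C * of_int a / of_int N :: real) = of_int b / of_int N"
proof -
  have "N > 0"
    using assms(2,3) by linarith
  then have "of_int C * of_int a / of_int N = of_int Q + of_int b / (of_int N :: real)"
    using arg_cong[OF assms(1), of real_of_int] by (simp add: field_simps)
  moreover have "0 \<le> of_int b / (of_int N :: real)" "of_int b / (of_int N :: real) < 1"
    using assms(2,3) \<open>N > 0\<close> by simp_all
  ultimately show ?thesis
    by (simp add: frac_eq)
qed

lemma mem_intervals_of_approximation:
  fixes a b C N Q :: int and u v \<eta> :: real
  assumes "N > 0" "0 \<le> u" "u + \<eta> \<le> 1" "0 \<le> v" "v + \<eta> \<le> 1" "C * a = N * Q + b"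
    and "\<bar>of_int a - (u + \<eta> / 2) * N\<bar> < \<eta> * N / 2"
    and "\<bar>of_int b - (v + \<eta> / 2) * N\<bar> < \<eta> * N / 2"
  shows "of_int a / of_int N \<in> {u..u+\<eta>}" "frac (of_int C * of_int a / of_int N) \<in> {v..v+\<eta>}"
    "0 < a" "a < N"
proof -
  have a: "u * N < a" "a < (u + \<eta>) * N"
    using assms(7) by (rule abs_sub_midpoint_less)+
  moreover have b: "v * N < b" "b < (v + \<eta>) * N"
    using assms(8) by (rule abs_sub_midpoint_less)+
  moreover have "0 \<le> u * N" "0 \<le> v * N" "(u + \<eta>) * N \<le> N" "(v + \<eta>) * N \<le> N"
    using assms(1-5) by (simp_all add: mult_left_le_one_le)
  ultimately have ranges: "(0::real) < of_int a" "(of_int a::real) < of_int N"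
    "(0::real) < of_int b" "(of_int b::real) < of_int N"
    by linarith+
  then show "0 < a" "a < N"
    by simp_all
  have b_range: "0 \<le> b" "b < N"
    using ranges by simp_all
  show "of_int a / of_int N \<in> {u..u+\<eta>}"
    using a assms(1) by (simp add: pos_le_divide_eq pos_divide_le_eq)
  have "frac (of_int C * of_int a / of_int N) = (of_int b / of_int N :: real)"
    using assms(6) b_range by (rule frac_div_eq_remainder)
  then show "frac (of_int C * of_int a / of_int N) \<in> {v..v+\<eta>}"
    using b assms(1) by (simp add: pos_le_divide_eq pos_divide_le_eq)
qed

lemma exists_fib_lattice_point:
  fixes \<eta> \<alpha> \<beta> :: real
  assumes "\<eta> > 0" "4 \<le> n"
    and "12 / \<eta> < sqrt (fib n)" "1728 * 64 ^ 64 / \<eta> ^ 3 < sqrt (fib n)"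
  obtains k j :: nat and x y :: int where "k + j + 2 = n"
    "coprime (x * fib (k + 1) + y * fib (k + 2)) (int (fib n))"
    "\<bar>of_int (x * fib (k + 1) + y * fib (k + 2)) - \<alpha> * fib n\<bar> < \<eta> * fib n / 2"
    "\<bar>of_int (x * fib (j + 1) - y * fib j) - (-1) ^ k * \<beta> * fib n\<bar> < \<eta> * fib n / 2"
proof -
  define j where "j = n div 2"
  obtain k where n: "k + j + 2 = n" and "coprime (fib (k + 1)) (fib n)"
    using coprime_fib_near_half[OF assms(2)] unfolding j_def by blast
  define N where "N = int (fib n)"
  define M where "M = real (fib (j + 2))"
  define \<epsilon> where "\<epsilon> = \<eta> * N / 4"
  have "N > 0"
    using assms(2) by (simp add: N_def fib_neq_0_nat)
  have "M > 0"
    unfolding M_def of_nat_0_less_iff by (rule fib_neq_0_nat) simp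
  have N_split: "N = int (fib (j + 1)) * fib (k + 2) + int (fib j) * fib (k + 1)"
    unfolding N_def n[symmetric] fib_add_eq by simp
  have "k + 1 \<le> j"
    using n unfolding j_def by presburger
  then have "fib (k + 1) + fib (k + 2) \<le> fib (j + 2)"
    using fib_mono[of "Suc (Suc (Suc k))" "j + 2"] by simp
  then have M1: "real_of_int (int (fib (k + 1)) + int (fib (k + 2))) \<le> M"
    by (simp add: M_def)
  have M2: "real_of_int (int (fib j) + int (fib (j + 1))) \<le> M"
    by (simp add: M_def fib_plus_2)
  have "M \<le> 3 * sqrt (fib n)"
    unfolding M_def using assms(2) by (intro fib_le_sqrt) (simp_all add: j_def)
  then have "M < \<epsilon>" and T: "64 ^ 64 * real_of_int N < (\<epsilon> / M) ^ 3"
    using lattice_scale_bounds[OF assms(1) _ \<open>M > 0\<close> _ assms(3,4)]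
    by (simp_all add: \<epsilon>_def N_def mult.commute)
  have "\<epsilon> / M * M \<le> \<epsilon>"
    using \<open>M > 0\<close> by simp
  moreover have "coprime (int (fib (k + 1))) N"
    using \<open>coprime (fib (k + 1)) (fib n)\<close> by (simp add: N_def)
  moreover have "2 * \<epsilon> = \<eta> * N / 2"
    by (simp add: \<epsilon>_def)
  ultimately show ?thesis
    using exists_coprime_lattice_point[OF N_split of_nat_0_le_iff of_nat_0_le_iff of_nat_0_le_iff
        of_nat_0_le_iff _ \<open>N > 0\<close> M1 M2 \<open>M < \<epsilon>\<close> _ T, where \<alpha> = \<alpha> and \<beta> = "(-1) ^ k * \<beta>"]
      that[OF n] by (auto simp: N_def)
qed

lemma exists_fib_numerator:
  fixes \<eta> u v :: real
  assumes "\<eta> > 0" "0 \<le> u" "u + \<eta> \<le> 1" "0 \<le> v" "v + \<eta> \<le> 1" "4 \<le> n"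
    and "12 / \<eta> < sqrt (fib n)" "1728 * 64 ^ 64 / \<eta> ^ 3 < sqrt (fib n)"
  shows "\<exists>a::int. real_of_int a / fib n \<in> {u..u+\<eta>}
    \<and> frac (real (fib (n - 1)) * real_of_int a / fib n) \<in> {v..v+\<eta>}
    \<and> 1 \<le> a \<and> a < int (fib n) \<and> coprime a (int (fib n))"
proof -
  obtain k j :: nat and x y :: int where n: "k + j + 2 = n"
    and xy: "coprime (x * fib (k + 1) + y * fib (k + 2)) (int (fib n))"
      "\<bar>of_int (x * fib (k + 1) + y * fib (k + 2)) - (u + \<eta> / 2) * fib n\<bar> < \<eta> * fib n / 2"
      "\<bar>of_int (x * fib (j + 1) - y * fib j) - (-1) ^ k * (v + \<eta> / 2) * fib n\<bar> < \<eta> * fib n / 2"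
    using exists_fib_lattice_point[OF assms(1,6-8)] by metis
  define b where "b = (-1) ^ k * (x * fib (j + 1) - y * fib j)"
  have "of_int b - (v + \<eta> / 2) * fib n
      = (-1) ^ k * (of_int (x * fib (j + 1) - y * fib j) - (-1) ^ k * (v + \<eta> / 2) * fib n)"
    by (simp add: b_def algebra_simps flip: power_add mult_2)
  then have b_approx: "\<bar>of_int b - (v + \<eta> / 2) * fib n\<bar> < \<eta> * fib n / 2"
    using xy(3) by (simp add: abs_mult power_abs)
  have "int (fib (n - 1)) * (x * fib (k + 1) + y * fib (k + 2))
      = int (fib n) * (x * fib k + y * fib (k + 1)) + b"
    unfolding b_def n[symmetric] using fib_pred_mult[of k j x y] by simp
  from mem_intervals_of_approximation[OF _ assms(2-5) this] xy(1,2) b_approx assms(6)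
  show ?thesis
    by (intro exI[of _ "x * fib (k + 1) + y * fib (k + 2)"]) (simp add: fib_neq_0_nat)
qed

theorem lemma1:
  fixes \<eta> u v :: real
  assumes "\<eta> > 0"
    and "{u..u+\<eta>} \<subseteq> {0..1}"
    and "{v..v+\<eta>} \<subseteq> {0..1}"
  shows "\<forall>\<^sub>F n in sequentially. \<exists>a::int.
           real_of_int a / real (fib n) \<in> {u..u+\<eta>} \<and>
           frac (real (fib (n - 1)) * real_of_int a / real (fib n)) \<in> {v..v+\<eta>} \<and>
           1 \<le> a \<and> a < int (fib n) \<and> gcd a (int (fib n)) = 1"
proof -
  have uv: "0 \<le> u" "u + \<eta> \<le> 1" "0 \<le> v" "v + \<eta> \<le> 1"
    using assms by auto
  have "filterlim (\<lambda>n. sqrt (real (fib n))) at_top sequentially"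
    by (rule filterlim_compose[OF sqrt_at_top filterlim_fib_at_top])
  then have "\<forall>\<^sub>F n in sequentially. c < sqrt (real (fib n))" for c
    by (simp add: filterlim_at_top_dense)
  then have "\<forall>\<^sub>F n in sequentially.
      4 \<le> n \<and> 12 / \<eta> < sqrt (real (fib n)) \<and> 1728 * 64 ^ 64 / \<eta> ^ 3 < sqrt (real (fib n))"
    by (intro eventually_conj eventually_ge_at_top)
  then show ?thesis
    by eventually_elim (use exists_fib_numerator[OF assms(1) uv] in \<open>auto simp: coprime_iff_gcd_eq_1\<close>)
qed

end
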